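(* In the setting described in the context, $\mathbb E\left[\sum_{k\in U}f_\tau(k)w_k\right]\ge(1-e^{-1})R/4$, where the expectation is over the random experiment for SA2 and $R$ is the maximum total reward of a feasible service placement.
   Context: An SPSC instance: finite sets $S$ (services), $V$ (nodes), $U$ (users); sizes $s_i>0$; capacities $c_j>0$; for each user $k$ a service $i_k\in S$, a set $T_k\subseteq V$, a reward $w_k>0$. A placement $X=\{X_i\subseteq V\}$ is feasible iff $\sum_is_i\mathbf 1[j\in X_i]\le c_j$ for all $j$; its total reward is $\sum_kw_k\mathbf 1[T_k\cap X_{i_k}\ne\emptyset]$. Let $\{x_{ij}\},\{y_k\}$ be an optimal solution of the LP with nonnegative variables: maximize $\sum_ky_kw_k$ s.t. $y_k\le\sum_{j\in T_k}x_{i_kj}$, $y_k\le1$; $\sum_ix_{ij}s_i\le c_j$; $x_{ij}=0$ if $s_i>c_j$; $0\le x_{ij}\le1$. Let $\beta:=1/4,\gamma:=1/2,\delta:=1/4$, $\mathbb N=\{1,2,\dots\}$. For $j\in V$: $P_j^\oplus:=\{i:c_j/2<s_i\le c_j\}$, $P_j^\ominus:=\{i:c_j/4<s_i\le c_j/2\}$, $P_j^q:=\{i:\gamma^qc_j\beta<s_i\le\gamma^{q-1}c_j\beta\}$ ($q\in\mathbb N$); $d_j^q:=\sum_{i\in P_j^q}x_{ij}$ for $q\in\mathbb N\cup\{\oplus,\ominus\}$; $v_j:=\delta c_j/\sum_{i:s_i\le c_j\beta}s_ix_{ij}$; $n_j^q:=\lceil v_jd_j^q\rceil$; $h_j:=d_j^\ominus$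 if $d_j^\ominus<2$, else $d_j^\ominus/2$. A construction map $\zeta:V\to\{1,2,3\}$ has slot set $\Lambda(\zeta)$ (slot $\sigma$ has node $\nu(\sigma)$, class $\kappa(\sigma)$): for each $j$, one slot of class $\oplus$ if $\zeta(j)=1$; two slots of class $\ominus$ if $\zeta(j)=2$; for each $q\in\mathbb N$, $n_j^q$ slots of class $q$ if $\zeta(j)=3$; no other slots on $j$. A slot allocation of $\Lambda$ is $\tau:\Lambda\to S$ with $\tau(\sigma)\in P^{\kappa(\sigma)}_{\nu(\sigma)}$; $X^\tau_i:=\{j:\exists\sigma,\nu(\sigma)=j,\tau(\sigma)=i\}$; $f_\tau(k):=\mathbf 1[T_k\cap X^\tau_{i_k}\ne\emptyset]$. Random experiment: $\zeta(j)$ independent over $j$, equal to $1,2,3$ with probabilities $\delta d_j^\oplus,\ \delta h_j,\ 1-\delta d_j^\oplus-\delta h_j$; given $\zeta$, each slot $\sigma\in\Lambda(\zeta)$ independently gets $\tau(\sigma)=i$ with probability $x_{i\nu(\sigma)}/d^{\kappa(\sigma)}_{\nu(\sigma)}$, $i\in P^{\kappa(\sigma)}_{\nu(\sigma)}$. *)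

theory Defs
  imports Complex_Main "HOL-Library.FuncSet"
begin

text \<open>SPSC instance data: services S (type 's), nodes V (type 'v), users U (type 'u);
  sizes s, capacities c, requested service isvc k, node set T k, reward w k.\<close>

definition spsc_instance ::
  "'s set \<Rightarrow> 'v set \<Rightarrow> 'u set \<Rightarrow> ('s \<Rightarrow> real) \<Rightarrow> ('v \<Rightarrow> real) \<Rightarrow>
   ('u \<Rightarrow> 's) \<Rightarrow> ('u \<Rightarrow> 'v set) \<Rightarrow> ('u \<Rightarrow> real) \<Rightarrow> bool" where
  "spsc_instance S V U s c isvc T w \<longleftrightarrow>
     finite S \<and> finite V \<and> finite U \<and>
     (\<forall>i\<in>S. s i > 0) \<and> (\<forall>j\<in>V. c j > 0) \<and>
     (\<forall>k\<in>U. isvc k \<in> S \<and> T k \<subseteq> V \<and> w k > 0)"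

definition feasible_placement ::
  "'s set \<Rightarrow> 'v set \<Rightarrow> ('s \<Rightarrow> real) \<Rightarrow> ('v \<Rightarrow> real) \<Rightarrow> ('s \<Rightarrow> 'v set) \<Rightarrow> bool" where
  "feasible_placement S V s c X \<longleftrightarrow>
     (\<forall>i\<in>S. X i \<subseteq> V) \<and>
     (\<forall>j\<in>V. (\<Sum>i\<in>S. s i * (if j \<in> X i then 1 else 0)) \<le> c j)"

definition total_reward ::
  "'u set \<Rightarrow> ('u \<Rightarrow> 's) \<Rightarrow> ('u \<Rightarrow> 'v set) \<Rightarrow> ('u \<Rightarrow> real) \<Rightarrow> ('s \<Rightarrow> 'v set) \<Rightarrow> real" where
  "total_reward U isvc T w X = (\<Sum>k\<in>U. w k * (if T k \<inter> X (isvc k) \<noteq> {} then 1 else 0))"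

text \<open>R: maximum total reward over feasible placements (placements as extensional
  functions on S, so the set of placements is finite).\<close>

definition opt_reward ::
  "'s set \<Rightarrow> 'v set \<Rightarrow> 'u set \<Rightarrow> ('s \<Rightarrow> real) \<Rightarrow> ('v \<Rightarrow> real) \<Rightarrow>
   ('u \<Rightarrow> 's) \<Rightarrow> ('u \<Rightarrow> 'v set) \<Rightarrow> ('u \<Rightarrow> real) \<Rightarrow> real" where
  "opt_reward S V U s c isvc T w =
     Max (total_reward U isvc T w ` {X \<in> S \<rightarrow>\<^sub>E Pow V. feasible_placement S V s c X})"

definition lp_feasible ::
  "'s set \<Rightarrow> 'v set \<Rightarrow> 'u set \<Rightarrow> ('s \<Rightarrow> real) \<Rightarrow> ('v \<Rightarrow> real) \<Rightarrow>
   ('u \<Rightarrow> 's) \<Rightarrow> ('u \<Rightarrow> 'v set) \<Rightarrow> ('s \<Rightarrow> 'v \<Rightarrow> real) \<Rightarrow> ('u \<Rightarrow> real) \<Rightarrow> bool" where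
  "lp_feasible S V U s c isvc T x y \<longleftrightarrow>
     (\<forall>k\<in>U. 0 \<le> y k \<and> y k \<le> (\<Sum>j\<in>T k. x (isvc k) j) \<and> y k \<le> 1) \<and>
     (\<forall>j\<in>V. (\<Sum>i\<in>S. x i j * s i) \<le> c j) \<and>
     (\<forall>i\<in>S. \<forall>j\<in>V. 0 \<le> x i j \<and> x i j \<le> 1 \<and> (s i > c j \<longrightarrow> x i j = 0))"

definition lp_optimal ::
  "'s set \<Rightarrow> 'v set \<Rightarrow> 'u set \<Rightarrow> ('s \<Rightarrow> real) \<Rightarrow> ('v \<Rightarrow> real) \<Rightarrow>
   ('u \<Rightarrow> 's) \<Rightarrow> ('u \<Rightarrow> 'v set) \<Rightarrow> ('u \<Rightarrow> real) \<Rightarrow>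
   ('s \<Rightarrow> 'v \<Rightarrow> real) \<Rightarrow> ('u \<Rightarrow> real) \<Rightarrow> bool" where
  "lp_optimal S V U s c isvc T w x y \<longleftrightarrow>
     lp_feasible S V U s c isvc T x y \<and>
     (\<forall>x' y'. lp_feasible S V U s c isvc T x' y' \<longrightarrow>
        (\<Sum>k\<in>U. y' k * w k) \<le> (\<Sum>k\<in>U. y k * w k))"

text \<open>Size classes: Plus = \<oplus>, Minus = \<ominus>, Lvl q = q (q \<ge> 1).
  Constants beta = 1/4, gamma = 1/2, delta = 1/4.\<close>

datatype cls = Plus | Minus | Lvl nat

definition Pcls :: "'s set \<Rightarrow> ('s \<Rightarrow> real) \<Rightarrow> ('v \<Rightarrow> real) \<Rightarrow> 'v \<Rightarrow> cls \<Rightarrow> 's set" where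
  "Pcls S s c j \<kappa> = (case \<kappa> of
      Plus \<Rightarrow> {i\<in>S. c j / 2 < s i \<and> s i \<le> c j}
    | Minus \<Rightarrow> {i\<in>S. c j / 4 < s i \<and> s i \<le> c j / 2}
    | Lvl q \<Rightarrow> {i\<in>S. (1/2) ^ q * c j * (1/4) < s i \<and> s i \<le> (1/2) ^ (q - 1) * c j * (1/4)})"

definition dcls :: "'s set \<Rightarrow> ('s \<Rightarrow> real) \<Rightarrow> ('v \<Rightarrow> real) \<Rightarrow> ('s \<Rightarrow> 'v \<Rightarrow> real) \<Rightarrow> 'v \<Rightarrow> cls \<Rightarrow> real" where
  "dcls S s c x j \<kappa> = (\<Sum>i\<in>Pcls S s c j \<kappa>. x i j)"

definition vnode :: "'s set \<Rightarrow> ('s \<Rightarrow> real) \<Rightarrow> ('v \<Rightarrow> real) \<Rightarrow> ('s \<Rightarrow> 'v \<Rightarrow> real) \<Rightarrow> 'v \<Rightarrow> real" where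
  "vnode S s c x j = (1/4) * c j / (\<Sum>i\<in>{i\<in>S. s i \<le> c j * (1/4)}. s i * x i j)"

definition ncnt :: "'s set \<Rightarrow> ('s \<Rightarrow> real) \<Rightarrow> ('v \<Rightarrow> real) \<Rightarrow> ('s \<Rightarrow> 'v \<Rightarrow> real) \<Rightarrow> 'v \<Rightarrow> nat \<Rightarrow> nat" where
  "ncnt S s c x j q = nat \<lceil>vnode S s c x j * dcls S s c x j (Lvl q)\<rceil>"

definition hnode :: "'s set \<Rightarrow> ('s \<Rightarrow> real) \<Rightarrow> ('v \<Rightarrow> real) \<Rightarrow> ('s \<Rightarrow> 'v \<Rightarrow> real) \<Rightarrow> 'v \<Rightarrow> real" where
  "hnode S s c x j = (if dcls S s c x j Minus < 2 then dcls S s c x j Minus else dcls S s c x j Minus / 2)"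

text \<open>Slots of a construction map zeta : V \<rightarrow> {1,2,3}. A slot is (node, class, copy index).\<close>

definition slots :: "'s set \<Rightarrow> 'v set \<Rightarrow> ('s \<Rightarrow> real) \<Rightarrow> ('v \<Rightarrow> real) \<Rightarrow> ('s \<Rightarrow> 'v \<Rightarrow> real) \<Rightarrow>
    ('v \<Rightarrow> nat) \<Rightarrow> ('v \<times> cls \<times> nat) set" where
  "slots S V s c x \<zeta> =
     {(j, Plus, 0) | j. j \<in> V \<and> \<zeta> j = 1} \<union>
     {(j, Minus, m) | j m. j \<in> V \<and> \<zeta> j = 2 \<and> m < 2} \<union>
     {(j, Lvl q, m) | j q m. j \<in> V \<and> \<zeta> j = 3 \<and> 1 \<le> q \<and> m < ncnt S s c x j q}"

definition allocations :: "'s set \<Rightarrow> 'v set \<Rightarrow> ('s \<Rightarrow> real) \<Rightarrow> ('v \<Rightarrow> real) \<Rightarrow> ('s \<Rightarrow> 'v \<Rightarrow> real) \<Rightarrow>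
    ('v \<Rightarrow> nat) \<Rightarrow> ('v \<times> cls \<times> nat \<Rightarrow> 's) set" where
  "allocations S V s c x \<zeta> =
     (\<Pi>\<^sub>E \<sigma>\<in>slots S V s c x \<zeta>. Pcls S s c (fst \<sigma>) (fst (snd \<sigma>)))"

definition placement_of :: "('v \<times> cls \<times> nat) set \<Rightarrow> ('v \<times> cls \<times> nat \<Rightarrow> 's) \<Rightarrow> 's \<Rightarrow> 'v set" where
  "placement_of \<Lambda> \<tau> i = {j. \<exists>\<sigma>\<in>\<Lambda>. fst \<sigma> = j \<and> \<tau> \<sigma> = i}"

definition zeta_prob :: "'s set \<Rightarrow> ('s \<Rightarrow> real) \<Rightarrow> ('v \<Rightarrow> real) \<Rightarrow> ('s \<Rightarrow> 'v \<Rightarrow> real) \<Rightarrow> 'v \<Rightarrow> nat \<Rightarrow> real" where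
  "zeta_prob S s c x j a =
     (if a = 1 then (1/4) * dcls S s c x j Plus
      else if a = 2 then (1/4) * hnode S s c x j
      else 1 - (1/4) * dcls S s c x j Plus - (1/4) * hnode S s c x j)"

definition tau_prob :: "'s set \<Rightarrow> 'v set \<Rightarrow> ('s \<Rightarrow> real) \<Rightarrow> ('v \<Rightarrow> real) \<Rightarrow> ('s \<Rightarrow> 'v \<Rightarrow> real) \<Rightarrow>
    ('v \<Rightarrow> nat) \<Rightarrow> ('v \<times> cls \<times> nat \<Rightarrow> 's) \<Rightarrow> real" where
  "tau_prob S V s c x \<zeta> \<tau> =
     (\<Prod>\<sigma>\<in>slots S V s c x \<zeta>. x (\<tau> \<sigma>) (fst \<sigma>) / dcls S s c x (fst \<sigma>) (fst (snd \<sigma>)))"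

text \<open>Expected reward E[sum_k f_tau(k) w_k] of the random experiment (SA2),
  written as the finite sum over all outcomes (zeta, tau) of probability times reward.\<close>

definition expected_reward ::
  "'s set \<Rightarrow> 'v set \<Rightarrow> 'u set \<Rightarrow> ('s \<Rightarrow> real) \<Rightarrow> ('v \<Rightarrow> real) \<Rightarrow>
   ('u \<Rightarrow> 's) \<Rightarrow> ('u \<Rightarrow> 'v set) \<Rightarrow> ('u \<Rightarrow> real) \<Rightarrow> ('s \<Rightarrow> 'v \<Rightarrow> real) \<Rightarrow> real" where
  "expected_reward S V U s c isvc T w x =
     (\<Sum>\<zeta>\<in>(V \<rightarrow>\<^sub>E {1, 2, 3::nat}).
        (\<Prod>j\<in>V. zeta_prob S s c x j (\<zeta> j)) *
        (\<Sum>\<tau>\<in>allocations S V s c x \<zeta>.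
           tau_prob S V s c x \<zeta> \<tau> *
           (\<Sum>k\<in>U. (if T k \<inter> placement_of (slots S V s c x \<zeta>) \<tau> (isvc k) \<noteq> {} then 1 else 0) * w k)))"

end

theory Submission
  imports Defs "HOL-Analysis.Convex"
begin

text \<open>User k is served unless no slot on a node of T k receives service i = isvc k. Nodes
  choose their construction independently and slots are filled independently, so this miss
  probability is a product of per-node miss probabilities. The LP capacity constraint at j gives
  d j Plus / 2 + d j Minus / 4 + t j \<le> 1, where t j * c j is the LP load of the services of
  size at most c j / 4; hence \<zeta> j = 3 has probability at least max (1/4) (t j), and the
  v j = 1 / (4 * t j) copies of a level hit i at rate v j * x i j. Whatever the size class of i,
  node j therefore misses i with probability at most 1 - (1 - exp (- x i j)) / 4. These bounds
  multiply to 1 - (1 - exp (- (\<Sum>j\<in>T k. x i j))) / 4, and as y k \<le> min 1 (\<Sum>j\<in>T k. x i j),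
  concavity of 1 - exp (- z) shows that k is served with probability at least
  (1 - exp (-1)) * y k / 4. Finally the LP optimum is at least R.\<close>

lemma mult_one_minus_exp_le:
  fixes l z :: real
  assumes "0 \<le> l" "l \<le> 1"
  shows "l * (1 - exp (- z)) \<le> 1 - exp (- (l * z))"
proof -
  have "exp ((1 - l) *\<^sub>R 0 + l *\<^sub>R (- z)) \<le> (1 - l) * exp 0 + l * exp (- z)"
    using convex_onD[OF exp_convex, of l 0 "- z"] assms by auto
  then show ?thesis by (simp add: algebra_simps)
qed

lemma one_minus_exp_le_quadratic:
  fixes z :: real
  assumes "0 \<le> z" "z \<le> 2"
  shows "1 - exp (- z) \<le> z - z\<^sup>2 / 4"
proof -
  have "(1 - z / 2)\<^sup>2 \<le> (exp (- (z / 2)))\<^sup>2"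
    using exp_ge_add_one_self[of "- (z / 2)"] assms by (intro power_mono) auto
  also have "(exp (- (z / 2)))\<^sup>2 = exp (- z)"
    by (simp add: power2_eq_square exp_add[symmetric])
  finally show ?thesis by (simp add: power2_eq_square algebra_simps)
qed

text \<open>The level case: \<zeta> j = 3 has probability p \<ge> max (1/4) t, and the copy factor of the
  levels is 1 / (4 * t).\<close>

lemma one_minus_exp_le_rescaled:
  fixes p t z :: real
  assumes "0 < t" "1 / 4 \<le> p" "t \<le> p" "0 \<le> z"
  shows "(1 - exp (- z)) / 4 \<le> p * (1 - exp (- (z / (4 * t))))"
proof (cases "t \<le> 1 / 4")
  case True
  have "4 * t * z \<le> z"
    using mult_left_le_one_le[of z "4 * t"] assms True by simp
  then have "z \<le> z / (4 * t)"
    using assms by (simp add: le_divide_eq algebra_simps)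
  then have "1 - exp (- z) \<le> 1 - exp (- (z / (4 * t)))" by simp
  moreover have "0 \<le> 1 - exp (- z)" using assms by simp
  ultimately have "1 / 4 * (1 - exp (- z)) \<le> p * (1 - exp (- (z / (4 * t))))"
    using assms by (intro mult_mono) auto
  then show ?thesis by simp
next
  case False
  let ?l = "1 / (4 * t)"
  have l: "0 \<le> ?l" "?l \<le> 1" using False assms by (auto simp: field_simps)
  have "(1 - exp (- z)) / 4 = t * (?l * (1 - exp (- z)))"
    using assms by (simp add: field_simps)
  also have "\<dots> \<le> t * (1 - exp (- (?l * z)))"
    using mult_one_minus_exp_le[OF l] assms by (intro mult_left_mono) auto
  also have "\<dots> \<le> p * (1 - exp (- (?l * z)))"
    using assms l by (intro mult_right_mono) auto
  finally show ?thesis by simp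
qed

text \<open>The two slots of class \<ominus> each hit with probability x / d, and the class is chosen
  with probability h / 4, where h = d if d < 2 and h = d / 2 otherwise.\<close>

lemma one_minus_exp_le_two_draws:
  fixes x d :: real
  assumes "0 < x" "x \<le> d" "x \<le> 1"
  shows "(1 - exp (- x)) / 4 \<le> (if d < 2 then d else d / 2) / 4 * (1 - ((d - x) / d)\<^sup>2)"
proof -
  have d: "0 < d" using assms by linarith
  have hit: "1 - ((d - x) / d)\<^sup>2 = 2 * x / d - x\<^sup>2 / d\<^sup>2"
    using d by (simp add: field_simps power2_eq_square)
  have lin: "(1 - exp (- x)) / 4 \<le> x / 4"
    using exp_ge_add_one_self[of "- x"] by simp
  show ?thesis
  proof (cases "d < 2")
    case True
    have "x\<^sup>2 / (4 * d) \<le> x / 4"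
      using assms d by (simp add: field_simps power2_eq_square mult_right_mono)
    moreover have "d / 4 * (2 * x / d - x\<^sup>2 / d\<^sup>2) = x / 2 - x\<^sup>2 / (4 * d)"
      using d by (simp add: field_simps power2_eq_square)
    ultimately show ?thesis using True lin hit by simp
  next
    case False
    have "(1 - exp (- x)) / 4 \<le> (x - x\<^sup>2 / 4) / 4"
      using one_minus_exp_le_quadratic[of x] assms by simp
    also have "\<dots> \<le> x / 4 - x\<^sup>2 / (8 * d)"
      using divide_left_mono[of 16 "8 * d" "x\<^sup>2"] False by simp
    also have "\<dots> = d / 2 / 4 * (2 * x / d - x\<^sup>2 / d\<^sup>2)"
      using d by (simp add: field_simps power2_eq_square)
    finally show ?thesis using False hit by simp
  qed
qed

lemma prod_affine_le:
  fixes p :: real and a :: "'a \<Rightarrow> real"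
  assumes "finite A" "0 \<le> p" "p \<le> 1" "\<And>j. j \<in> A \<Longrightarrow> 0 \<le> a j \<and> a j \<le> 1"
  shows "(\<Prod>j\<in>A. 1 - p + p * a j) \<le> 1 - p + p * (\<Prod>j\<in>A. a j)"
  using assms(1,4)
proof (induction A rule: finite_induct)
  case empty
  then show ?case by simp
next
  case (insert b A)
  let ?P = "\<Prod>j\<in>A. a j"
  have ab: "0 \<le> a b" "a b \<le> 1" and P: "0 \<le> ?P" "?P \<le> 1"
    using insert.prems by (auto intro: prod_nonneg prod_le_1)
  have "(\<Prod>j\<in>insert b A. 1 - p + p * a j) = (1 - p + p * a b) * (\<Prod>j\<in>A. 1 - p + p * a j)"
    using insert.hyps by simp
  also have "\<dots> \<le> (1 - p + p * a b) * (1 - p + p * ?P)"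
    using insert ab assms(2,3) by (intro mult_left_mono) (auto simp: mult_left_le)
  also have "\<dots> = 1 - p + p * (a b * ?P) - p * (1 - p) * ((1 - a b) * (1 - ?P))"
    by (simp add: algebra_simps)
  also have "\<dots> \<le> 1 - p + p * (a b * ?P)"
    using ab P assms(2,3) by simp
  finally show ?case using insert.hyps by simp
qed

lemma prod_superset_le:
  fixes f :: "'a \<Rightarrow> real"
  assumes "finite B" "A \<subseteq> B" "\<And>b. b \<in> B \<Longrightarrow> 0 \<le> f b \<and> f b \<le> 1"
  shows "prod f B \<le> prod f A"
proof -
  have "prod f B = prod f A * prod f (B - A)"
    using prod.subset_diff[OF assms(2,1)] by (simp add: mult.commute)
  moreover have "prod f (B - A) \<le> 1" using assms by (intro prod_le_1) auto
  moreover have "0 \<le> prod f A" using assms by (intro prod_nonneg) auto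
  ultimately show ?thesis by (simp add: mult_left_le)
qed

lemma indicator_bex_eq_one_minus_prod:
  assumes "finite A"
  shows "(if \<exists>a\<in>A. Q a then 1 else 0 :: real) = 1 - (\<Prod>a\<in>A. if Q a then 0 else 1)"
  using assms by (auto simp: prod_zero_iff intro: prod.neutral)

lemma finite_dyadic_levels:
  fixes r :: real
  assumes "0 < r"
  shows "finite {q. r \<le> (1 / 2) ^ (q - 1)}"
proof -
  obtain N where N: "(1 / 2 :: real) ^ N < r"
    using real_arch_pow_inv[OF assms, of "1 / 2"] by auto
  have "{q. r \<le> (1 / 2) ^ (q - 1)} \<subseteq> {..N}"
  proof
    fix q assume "q \<in> {q. r \<le> (1 / 2) ^ (q - 1)}"
    then have "r \<le> (1 / 2) ^ (q - 1)" by simp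
    then have "(1 / 2 :: real) ^ N < (1 / 2) ^ (q - 1)" using N by linarith
    then show "q \<in> {..N}" by (simp add: power_strict_decreasing_iff)
  qed
  then show ?thesis using finite_subset by blast
qed

lemma exists_dyadic_level:
  fixes r :: real
  assumes "0 < r" "r \<le> 1"
  shows "\<exists>q\<ge>1. (1 / 2) ^ q < r \<and> r \<le> (1 / 2) ^ (q - 1)"
proof -
  obtain N where N: "(1 / 2 :: real) ^ N < r"
    using real_arch_pow_inv[OF assms(1), of "1 / 2"] by auto
  define q where "q = (LEAST q. (1 / 2 :: real) ^ q < r)"
  have q: "(1 / 2 :: real) ^ q < r"
    unfolding q_def using N by (rule LeastI)
  moreover have "\<not> (1 / 2 :: real) ^ 0 < r" using assms by simp
  ultimately have "q \<noteq> 0" by metis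
  then have "\<not> (1 / 2 :: real) ^ (q - 1) < r"
    unfolding q_def by (intro not_less_Least) auto
  then show ?thesis using q \<open>q \<noteq> 0\<close> by (intro exI[of _ q]) auto
qed

lemma lp_feasible_placement:
  assumes "spsc_instance S V U s c isvc T w" "feasible_placement S V s c X"
  shows "lp_feasible S V U s c isvc T (\<lambda>i j. if j \<in> X i then 1 else 0)
           (\<lambda>k. if T k \<inter> X (isvc k) \<noteq> {} then 1 else 0)"
  unfolding lp_feasible_def
proof (intro conjI ballI)
  fix k assume k: "k \<in> U"
  then have "finite (T k)"
    using assms(1) finite_subset unfolding spsc_instance_def by blast
  show "(if T k \<inter> X (isvc k) \<noteq> {} then 1 else 0)
      \<le> (\<Sum>j\<in>T k. if j \<in> X (isvc k) then 1 else 0 :: real)"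
  proof (cases "T k \<inter> X (isvc k) = {}")
    case False
    then obtain j where j: "j \<in> T k" "j \<in> X (isvc k)" by auto
    have "(if j \<in> X (isvc k) then 1 else 0) \<le> (\<Sum>j\<in>T k. if j \<in> X (isvc k) then 1 else 0 :: real)"
      using j \<open>finite (T k)\<close> by (intro member_le_sum) auto
    then show ?thesis using False j by simp
  qed (simp add: sum_nonneg)
next
  fix j assume "j \<in> V"
  then show "(\<Sum>i\<in>S. (if j \<in> X i then 1 else 0) * s i) \<le> c j"
    using assms(2) unfolding feasible_placement_def by (simp add: mult.commute)
next
  fix i j assume i: "i \<in> S" and j: "j \<in> V"
  have "s i * (if j \<in> X i then 1 else 0) \<le> (\<Sum>i\<in>S. s i * (if j \<in> X i then 1 else 0))"
    using i assms(1) by (intro member_le_sum) (auto simp: spsc_instance_def less_imp_le)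
  also have "\<dots> \<le> c j"
    using assms(2) j unfolding feasible_placement_def by auto
  finally show "c j < s i \<longrightarrow> (if j \<in> X i then 1 else 0) = (0 :: real)" by auto
qed auto

lemma opt_reward_le_lp_optimum:
  assumes inst: "spsc_instance S V U s c isvc T w" and opt: "lp_optimal S V U s c isvc T w x y"
  shows "opt_reward S V U s c isvc T w \<le> (\<Sum>k\<in>U. y k * w k)"
proof -
  let ?F = "{X \<in> S \<rightarrow>\<^sub>E Pow V. feasible_placement S V s c X}"
  have fin: "finite S" "finite V" and c: "\<forall>j\<in>V. 0 < c j"
    using inst unfolding spsc_instance_def by auto
  have "finite ?F"
    by (rule finite_subset[of _ "S \<rightarrow>\<^sub>E Pow V"]) (auto intro!: finite_PiE fin)
  moreover have "(\<lambda>i\<in>S. {}) \<in> ?F"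
    using c unfolding feasible_placement_def by (auto simp: less_imp_le)
  ultimately have "opt_reward S V U s c isvc T w \<in> total_reward U isvc T w ` ?F"
    unfolding opt_reward_def by (intro Max_in finite_imageI) blast+
  then obtain X where X: "feasible_placement S V s c X"
    and R: "opt_reward S V U s c isvc T w = total_reward U isvc T w X"
    by auto
  have "total_reward U isvc T w X = (\<Sum>k\<in>U. (if T k \<inter> X (isvc k) \<noteq> {} then 1 else 0) * w k)"
    unfolding total_reward_def by (simp add: mult.commute)
  also have "\<dots> \<le> (\<Sum>k\<in>U. y k * w k)"
    using opt lp_feasible_placement[OF inst X] unfolding lp_optimal_def by blast
  finally show ?thesis using R by simp
qed

locale spsc_lp =
  fixes S :: "'s set" and V :: "'v set" and U :: "'u set"
    and s :: "'s \<Rightarrow> real" and c :: "'v \<Rightarrow> real"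
    and isvc :: "'u \<Rightarrow> 's" and T :: "'u \<Rightarrow> 'v set" and w :: "'u \<Rightarrow> real"
    and x :: "'s \<Rightarrow> 'v \<Rightarrow> real" and y :: "'u \<Rightarrow> real"
  assumes inst: "spsc_instance S V U s c isvc T w"
    and opt: "lp_optimal S V U s c isvc T w x y"
begin

lemma finite_S: "finite S" and finite_V: "finite V"
  and s_pos: "i \<in> S \<Longrightarrow> 0 < s i" and c_pos: "j \<in> V \<Longrightarrow> 0 < c j"
  and isvc_in_S: "k \<in> U \<Longrightarrow> isvc k \<in> S" and T_subset_V: "k \<in> U \<Longrightarrow> T k \<subseteq> V"
  and w_pos: "k \<in> U \<Longrightarrow> 0 < w k"
  using inst unfolding spsc_instance_def by auto

lemma y_bounds: "k \<in> U \<Longrightarrow> 0 \<le> y k \<and> y k \<le> (\<Sum>j\<in>T k. x (isvc k) j) \<and> y k \<le> 1"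
  and x_bounds: "i \<in> S \<Longrightarrow> j \<in> V \<Longrightarrow> 0 \<le> x i j \<and> x i j \<le> 1 \<and> (c j < s i \<longrightarrow> x i j = 0)"
  and load_le_capacity: "j \<in> V \<Longrightarrow> (\<Sum>i\<in>S. x i j * s i) \<le> c j"
  using opt unfolding lp_optimal_def lp_feasible_def by auto

lemma x_nonneg: "i \<in> S \<Longrightarrow> j \<in> V \<Longrightarrow> 0 \<le> x i j"
  using x_bounds by auto

abbreviation "P j \<kappa> \<equiv> Pcls S s c j \<kappa>"
abbreviation "d j \<kappa> \<equiv> dcls S s c x j \<kappa>"
abbreviation "n j q \<equiv> ncnt S s c x j q"
abbreviation "pz j a \<equiv> zeta_prob S s c x j a"
abbreviation "small_load j \<equiv> (\<Sum>i\<in>{i\<in>S. s i \<le> c j * (1 / 4)}. s i * x i j)"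

lemma P_subset_S: "P j \<kappa> \<subseteq> S"
  unfolding Pcls_def by (auto split: cls.splits)

lemma finite_P: "finite (P j \<kappa>)"
  using finite_subset[OF P_subset_S finite_S] .

lemma x_nonneg_P: "i \<in> P j \<kappa> \<Longrightarrow> j \<in> V \<Longrightarrow> 0 \<le> x i j"
  using x_nonneg P_subset_S by blast

lemma d_nonneg: "j \<in> V \<Longrightarrow> 0 \<le> d j \<kappa>"
  unfolding dcls_def using x_nonneg_P by (intro sum_nonneg) auto

lemma x_le_d: "j \<in> V \<Longrightarrow> i \<in> P j \<kappa> \<Longrightarrow> x i j \<le> d j \<kappa>"
  unfolding dcls_def using x_nonneg_P finite_P by (intro member_le_sum) auto

lemma n_nonzero_imp_d_nonzero: "n j q \<noteq> 0 \<Longrightarrow> d j (Lvl q) \<noteq> 0"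
  unfolding ncnt_def by auto

definition node_slots :: "'v \<Rightarrow> nat \<Rightarrow> ('v \<times> cls \<times> nat) set" where
  "node_slots j a =
     (if a = 1 then {(j, Plus, 0)}
      else if a = 2 then {(j, Minus, 0), (j, Minus, 1)}
      else if a = 3 then {(j, Lvl q, m) | q m. 1 \<le> q \<and> m < n j q}
      else {})"

lemma slots_eq_UN_node_slots: "slots S V s c x \<zeta> = (\<Union>j\<in>V. node_slots j (\<zeta> j))"
  unfolding slots_def node_slots_def by (auto simp: less_2_cases_iff)

lemma fst_node_slots: "\<sigma> \<in> node_slots j a \<Longrightarrow> fst \<sigma> = j"
  unfolding node_slots_def by (auto split: if_splits)

lemma finite_levels:
  assumes j: "j \<in> V"
  shows "finite {q. n j q \<noteq> 0}"
proof -
  have "{q. n j q \<noteq> 0} \<subseteq> (\<Union>i\<in>S. {q. 4 * s i / c j \<le> (1 / 2) ^ (q - 1)})"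
  proof
    fix q assume "q \<in> {q. n j q \<noteq> 0}"
    then have "d j (Lvl q) \<noteq> 0"
      using n_nonzero_imp_d_nonzero by simp
    then have "P j (Lvl q) \<noteq> {}"
      unfolding dcls_def by auto
    then show "q \<in> (\<Union>i\<in>S. {q. 4 * s i / c j \<le> (1 / 2) ^ (q - 1)})"
      using c_pos[OF j] unfolding Pcls_def by (auto simp: field_simps)
  qed
  moreover have "finite {q. 4 * s i / c j \<le> (1 / 2) ^ (q - 1)}" if "i \<in> S" for i
    using s_pos[OF that] c_pos[OF j] by (intro finite_dyadic_levels) simp
  ultimately show ?thesis using finite_S by (meson finite_UN_I finite_subset)
qed

lemma finite_node_slots:
  assumes "j \<in> V"
  shows "finite (node_slots j a)"
proof -
  have "{(j, Lvl q, m) | q m. 1 \<le> q \<and> m < n j q}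
      \<subseteq> (\<lambda>(q, m). (j, Lvl q, m)) ` (SIGMA q:{q. n j q \<noteq> 0}. {..<n j q})"
    by auto
  moreover have "finite (SIGMA q:{q. n j q \<noteq> 0}. {..<n j q})"
    using finite_levels[OF assms] by auto
  ultimately have "finite {(j, Lvl q, m) | q m. 1 \<le> q \<and> m < n j q}"
    by (rule finite_subset[OF _ finite_imageI])
  then show ?thesis
    unfolding node_slots_def by simp
qed

lemma finite_slots: "finite (slots S V s c x \<zeta>)"
  unfolding slots_eq_UN_node_slots using finite_V finite_node_slots by auto

lemma prod_slots:
  "(\<Prod>\<sigma>\<in>slots S V s c x \<zeta>. f \<sigma>) = (\<Prod>j\<in>V. \<Prod>\<sigma>\<in>node_slots j (\<zeta> j). f \<sigma>)"
  unfolding slots_eq_UN_node_slots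
proof (rule prod.UNION_disjoint)
  show "\<forall>i\<in>V. \<forall>j\<in>V. i \<noteq> j \<longrightarrow> node_slots i (\<zeta> i) \<inter> node_slots j (\<zeta> j) = {}"
    using fst_node_slots by blast
qed (use finite_V finite_node_slots in auto)

text \<open>With A = T k and i = isvc k, slot_miss and node_miss are the probabilities that a slot,
  respectively all slots of a node, do not place service i on a node of A. For A = {} they are
  total masses; a slot of an empty class then has mass d / d = 0, harmless because such a
  class is never chosen.\<close>

definition miss_weight :: "'v set \<Rightarrow> 's \<Rightarrow> 'v \<times> cls \<times> nat \<Rightarrow> 's \<Rightarrow> real" where
  "miss_weight A i \<sigma> i' =
     x i' (fst \<sigma>) / d (fst \<sigma>) (fst (snd \<sigma>)) * (if fst \<sigma> \<in> A \<and> i' = i then 0 else 1)"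

definition slot_miss :: "'v set \<Rightarrow> 's \<Rightarrow> 'v \<times> cls \<times> nat \<Rightarrow> real" where
  "slot_miss A i \<sigma> = (\<Sum>i'\<in>P (fst \<sigma>) (fst (snd \<sigma>)). miss_weight A i \<sigma> i')"

definition node_miss :: "'v set \<Rightarrow> 's \<Rightarrow> 'v \<Rightarrow> real" where
  "node_miss A i j = (\<Sum>a\<in>{1, 2, 3 :: nat}. pz j a * (\<Prod>\<sigma>\<in>node_slots j a. slot_miss A i \<sigma>))"

lemma slot_miss_eq:
  "slot_miss A i (j, \<kappa>, m) =
     (if j \<in> A then (d j \<kappa> - (if i \<in> P j \<kappa> then x i j else 0)) / d j \<kappa> else d j \<kappa> / d j \<kappa>)"
proof -
  have "(\<Sum>i'\<in>P j \<kappa>. x i' j * (if i' = i then 0 else 1)) = (\<Sum>i'\<in>P j \<kappa>. x i' j - (if i' = i then x i' j else 0))"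
    by (intro sum.cong) auto
  also have "\<dots> = d j \<kappa> - (if i \<in> P j \<kappa> then x i j else 0)"
    unfolding sum_subtractf dcls_def using finite_P by (simp add: sum.delta')
  finally show ?thesis
    unfolding slot_miss_def miss_weight_def dcls_def by (simp add: sum_divide_distrib[symmetric])
qed

lemma zeta_prob_sum: "pz j 1 + pz j 2 + pz j 3 = 1"
  unfolding zeta_prob_def by simp

lemma zeta_prob_1: "pz j 1 = d j Plus / 4"
  and zeta_prob_2: "pz j 2 = hnode S s c x j / 4"
  unfolding zeta_prob_def by auto

lemma node_miss_expand:
  "node_miss A i j = pz j 1 * (\<Prod>\<sigma>\<in>node_slots j 1. slot_miss A i \<sigma>)
     + pz j 2 * (\<Prod>\<sigma>\<in>node_slots j 2. slot_miss A i \<sigma>)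
     + pz j 3 * (\<Prod>\<sigma>\<in>node_slots j 3. slot_miss A i \<sigma>)"
  unfolding node_miss_def by simp

lemma node_miss_empty: "node_miss {} i j = 1"
proof -
  have "pz j 1 * (\<Prod>\<sigma>\<in>node_slots j 1. slot_miss {} i \<sigma>) = pz j 1"
    unfolding zeta_prob_1 by (simp add: node_slots_def slot_miss_eq)
  moreover have "pz j 2 * (\<Prod>\<sigma>\<in>node_slots j 2. slot_miss {} i \<sigma>) = pz j 2"
    unfolding zeta_prob_2 by (cases "d j Minus = 0") (auto simp: hnode_def node_slots_def slot_miss_eq)
  moreover have "(\<Prod>\<sigma>\<in>node_slots j 3. slot_miss {} i \<sigma>) = 1"
    using n_nonzero_imp_d_nonzero
    by (intro prod.neutral) (auto simp: node_slots_def slot_miss_eq)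
  ultimately show ?thesis
    unfolding node_miss_expand using zeta_prob_sum[of j] by (simp only: mult_1_right)
qed

lemma allocation_hit_prob:
  "(\<Sum>\<tau>\<in>allocations S V s c x \<zeta>. tau_prob S V s c x \<zeta> \<tau> *
      (if A \<inter> placement_of (slots S V s c x \<zeta>) \<tau> i \<noteq> {} then 1 else 0))
   = (\<Prod>\<sigma>\<in>slots S V s c x \<zeta>. slot_miss {} i \<sigma>) - (\<Prod>\<sigma>\<in>slots S V s c x \<zeta>. slot_miss A i \<sigma>)"
proof -
  let ?L = "slots S V s c x \<zeta>"
  have sum_prod: "(\<Sum>\<tau>\<in>allocations S V s c x \<zeta>. \<Prod>\<sigma>\<in>?L. miss_weight B i \<sigma> (\<tau> \<sigma>))
      = (\<Prod>\<sigma>\<in>?L. slot_miss B i \<sigma>)" for B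
    unfolding allocations_def slot_miss_def
    by (rule prod_sum_PiE[symmetric]) (auto intro: finite_slots finite_P)
  txt \<open>The hit indicator is 1 minus a product over the slots, so each summand factors
    over the slots like tau_prob itself.\<close>
  have "tau_prob S V s c x \<zeta> \<tau> * (if A \<inter> placement_of ?L \<tau> i \<noteq> {} then 1 else 0)
      = (\<Prod>\<sigma>\<in>?L. miss_weight {} i \<sigma> (\<tau> \<sigma>)) - (\<Prod>\<sigma>\<in>?L. miss_weight A i \<sigma> (\<tau> \<sigma>))" for \<tau>
  proof -
    have "(A \<inter> placement_of ?L \<tau> i \<noteq> {}) = (\<exists>\<sigma>\<in>?L. fst \<sigma> \<in> A \<and> \<tau> \<sigma> = i)"
      unfolding placement_of_def by auto
    then have hit: "(if A \<inter> placement_of ?L \<tau> i \<noteq> {} then 1 else 0)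
        = 1 - (\<Prod>\<sigma>\<in>?L. if fst \<sigma> \<in> A \<and> \<tau> \<sigma> = i then 0 else 1 :: real)"
      using indicator_bex_eq_one_minus_prod[OF finite_slots] by simp
    have miss: "(\<Prod>\<sigma>\<in>?L. miss_weight {} i \<sigma> (\<tau> \<sigma>)) *
        (\<Prod>\<sigma>\<in>?L. if fst \<sigma> \<in> A \<and> \<tau> \<sigma> = i then 0 else 1) = (\<Prod>\<sigma>\<in>?L. miss_weight A i \<sigma> (\<tau> \<sigma>))"
      unfolding prod.distrib[symmetric] by (intro prod.cong) (auto simp: miss_weight_def)
    have tau: "tau_prob S V s c x \<zeta> \<tau> = (\<Prod>\<sigma>\<in>?L. miss_weight {} i \<sigma> (\<tau> \<sigma>))"
      unfolding tau_prob_def miss_weight_def by simp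
    show ?thesis unfolding hit tau right_diff_distrib miss by simp
  qed
  then show ?thesis by (simp add: sum_subtractf sum_prod)
qed

lemma sum_zeta_prod_slot_miss:
  "(\<Sum>\<zeta>\<in>V \<rightarrow>\<^sub>E {1, 2, 3 :: nat}. (\<Prod>j\<in>V. pz j (\<zeta> j)) *
      (\<Prod>\<sigma>\<in>slots S V s c x \<zeta>. slot_miss A i \<sigma>)) = (\<Prod>j\<in>V. node_miss A i j)"
proof -
  have "(\<Prod>j\<in>V. pz j (\<zeta> j)) * (\<Prod>\<sigma>\<in>slots S V s c x \<zeta>. slot_miss A i \<sigma>)
      = (\<Prod>j\<in>V. pz j (\<zeta> j) * (\<Prod>\<sigma>\<in>node_slots j (\<zeta> j). slot_miss A i \<sigma>))" for \<zeta>
    unfolding prod_slots prod.distrib ..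
  then have "(\<Sum>\<zeta>\<in>V \<rightarrow>\<^sub>E {1, 2, 3 :: nat}. (\<Prod>j\<in>V. pz j (\<zeta> j)) *
      (\<Prod>\<sigma>\<in>slots S V s c x \<zeta>. slot_miss A i \<sigma>)) = (\<Sum>\<zeta>\<in>V \<rightarrow>\<^sub>E {1, 2, 3 :: nat}.
      \<Prod>j\<in>V. pz j (\<zeta> j) * (\<Prod>\<sigma>\<in>node_slots j (\<zeta> j). slot_miss A i \<sigma>))"
    by simp
  also have "\<dots> = (\<Prod>j\<in>V. node_miss A i j)"
    unfolding node_miss_def by (rule prod_sum_PiE[symmetric]) (auto intro: finite_V)
  finally show ?thesis .
qed

lemma user_hit_prob:
  "(\<Sum>\<zeta>\<in>V \<rightarrow>\<^sub>E {1, 2, 3 :: nat}. (\<Prod>j\<in>V. pz j (\<zeta> j)) *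
      (\<Sum>\<tau>\<in>allocations S V s c x \<zeta>. tau_prob S V s c x \<zeta> \<tau> *
         (if A \<inter> placement_of (slots S V s c x \<zeta>) \<tau> i \<noteq> {} then 1 else 0)))
   = 1 - (\<Prod>j\<in>V. node_miss A i j)"
proof -
  have "(\<Sum>\<zeta>\<in>V \<rightarrow>\<^sub>E {1, 2, 3 :: nat}. (\<Prod>j\<in>V. pz j (\<zeta> j)) *
      (\<Prod>\<sigma>\<in>slots S V s c x \<zeta>. slot_miss {} i \<sigma>)) = 1"
    unfolding sum_zeta_prod_slot_miss node_miss_empty by simp
  then show ?thesis
    unfolding allocation_hit_prob right_diff_distrib sum_subtractf sum_zeta_prod_slot_miss by simp
qed

lemma expected_reward_eq:
  "expected_reward S V U s c isvc T w x =
     (\<Sum>k\<in>U. w k * (1 - (\<Prod>j\<in>V. node_miss (T k) (isvc k) j)))"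
proof -
  let ?Z = "V \<rightarrow>\<^sub>E {1, 2, 3 :: nat}" and ?pz = "\<lambda>\<zeta>. \<Prod>j\<in>V. pz j (\<zeta> j)"
  let ?hit = "\<lambda>\<zeta> \<tau> k.
    (if T k \<inter> placement_of (slots S V s c x \<zeta>) \<tau> (isvc k) \<noteq> {} then 1 else 0 :: real)"
  have "expected_reward S V U s c isvc T w x = (\<Sum>\<zeta>\<in>?Z. \<Sum>k\<in>U. w k *
      (?pz \<zeta> * (\<Sum>\<tau>\<in>allocations S V s c x \<zeta>. tau_prob S V s c x \<zeta> \<tau> * ?hit \<zeta> \<tau> k)))"
    unfolding expected_reward_def
    by (intro sum.cong refl) (simp add: sum_distrib_left sum_distrib_right sum.swap[of _ U] ac_simps)
  also have "\<dots> = (\<Sum>k\<in>U. w k * (\<Sum>\<zeta>\<in>?Z.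
      ?pz \<zeta> * (\<Sum>\<tau>\<in>allocations S V s c x \<zeta>. tau_prob S V s c x \<zeta> \<tau> * ?hit \<zeta> \<tau> k)))"
    by (subst sum.swap) (simp add: sum_distrib_left)
  finally show ?thesis by (simp only: user_hit_prob)
qed

lemma slot_miss_bounds:
  assumes "fst \<sigma> \<in> V"
  shows "0 \<le> slot_miss A i \<sigma> \<and> slot_miss A i \<sigma> \<le> 1"
proof -
  obtain j \<kappa> m where \<sigma>: "\<sigma> = (j, \<kappa>, m)" by (cases \<sigma>) auto
  have j: "j \<in> V" using assms \<sigma> by simp
  define e where "e = (if i \<in> P j \<kappa> then x i j else 0)"
  have "0 \<le> e" "e \<le> d j \<kappa>" "0 \<le> d j \<kappa>"
    unfolding e_def using x_le_d[OF j] x_nonneg_P[OF _ j] d_nonneg[OF j] by auto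
  then show ?thesis
    unfolding \<sigma> slot_miss_eq e_def[symmetric] by (cases "d j \<kappa> = 0") (auto simp: divide_le_eq_1)
qed

lemma prod_node_slots_miss_bounds:
  assumes "j \<in> V"
  shows "0 \<le> (\<Prod>\<sigma>\<in>node_slots j a. slot_miss A i \<sigma>) \<and> (\<Prod>\<sigma>\<in>node_slots j a. slot_miss A i \<sigma>) \<le> 1"
  using slot_miss_bounds fst_node_slots assms by (metis prod_nonneg prod_le_1)

lemma small_load_nonneg: "j \<in> V \<Longrightarrow> 0 \<le> small_load j"
  using s_pos x_nonneg by (intro sum_nonneg mult_nonneg_nonneg) (auto intro: less_imp_le)

lemma class_loads_le_one:
  assumes j: "j \<in> V"
  shows "d j Plus / 2 + d j Minus / 4 + small_load j / c j \<le> 1"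
proof -
  let ?A = "P j Plus" and ?B = "P j Minus" and ?C = "{i\<in>S. s i \<le> c j * (1 / 4)}"
  have cj: "0 < c j" using c_pos[OF j] .
  have "d j Plus * (c j / 2) \<le> (\<Sum>i\<in>?A. x i j * s i)"
    unfolding dcls_def sum_distrib_right using P_subset_S x_nonneg[OF _ j]
    by (intro sum_mono mult_left_mono) (auto simp: Pcls_def)
  moreover have "d j Minus * (c j / 4) \<le> (\<Sum>i\<in>?B. x i j * s i)"
    unfolding dcls_def sum_distrib_right using P_subset_S x_nonneg[OF _ j]
    by (intro sum_mono mult_left_mono) (auto simp: Pcls_def)
  moreover have "?A \<inter> ?B = {}" "(?A \<union> ?B) \<inter> ?C = {}"
    unfolding Pcls_def using cj by auto
  then have "(\<Sum>i\<in>?A. x i j * s i) + (\<Sum>i\<in>?B. x i j * s i) + (\<Sum>i\<in>?C. x i j * s i)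
      = (\<Sum>i\<in>?A \<union> ?B \<union> ?C. x i j * s i)"
    using finite_P finite_S by (simp add: sum.union_disjoint)
  moreover have "\<dots> \<le> (\<Sum>i\<in>S. x i j * s i)"
  proof (rule sum_mono2[OF finite_S])
    show "?A \<union> ?B \<union> ?C \<subseteq> S" using P_subset_S by blast
    show "0 \<le> x b j * s b" if "b \<in> S - (?A \<union> ?B \<union> ?C)" for b
      using that x_nonneg[of b j] s_pos[of b] j by (auto intro!: mult_nonneg_nonneg)
  qed
  ultimately have "d j Plus * (c j / 2) + d j Minus * (c j / 4) + small_load j \<le> c j"
    using load_le_capacity[OF j] by (simp add: mult.commute)
  then show ?thesis using cj by (simp add: field_simps)
qed

lemma zeta_prob_3_ge:
  assumes "j \<in> V"
  shows "1 / 4 \<le> pz j 3" and "small_load j / c j \<le> pz j 3"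
proof -
  have "0 \<le> small_load j / c j"
    using small_load_nonneg[OF assms] c_pos[OF assms] by simp
  then show "1 / 4 \<le> pz j 3" and "small_load j / c j \<le> pz j 3"
    using class_loads_le_one[OF assms] d_nonneg[OF assms, of Plus] d_nonneg[OF assms, of Minus]
    unfolding zeta_prob_def hnode_def by (auto split: if_split_asm)
qed

lemma zeta_prob_nonneg:
  assumes "j \<in> V" "a \<in> {1, 2, 3}"
  shows "0 \<le> pz j a"
proof -
  have "0 \<le> hnode S s c x j"
    unfolding hnode_def using d_nonneg[OF assms(1), of Minus] by simp
  then show ?thesis
    using assms zeta_prob_1[of j] zeta_prob_2[of j] zeta_prob_3_ge(1)[OF assms(1)]
      d_nonneg[OF assms(1), of Plus] by auto
qed

lemma node_miss_outside:
  assumes "j \<notin> A"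
  shows "node_miss A i j = 1"
proof -
  have "node_miss A i j = node_miss {} i j"
    unfolding node_miss_def slot_miss_def miss_weight_def using assms
    by (intro sum.cong prod.cong refl arg_cong2[where f = "(*)"]) (auto dest: fst_node_slots)
  then show ?thesis by (simp add: node_miss_empty)
qed

lemma node_miss_nonneg: "j \<in> V \<Longrightarrow> 0 \<le> node_miss A i j"
  unfolding node_miss_def using zeta_prob_nonneg prod_node_slots_miss_bounds
  by (intro sum_nonneg mult_nonneg_nonneg) auto

lemma node_miss_le:
  assumes j: "j \<in> V" and a: "a \<in> {1, 2, 3}"
  shows "node_miss A i j \<le> 1 - pz j a * (1 - (\<Prod>\<sigma>\<in>node_slots j a. slot_miss A i \<sigma>))"
proof -
  have le: "pz j b * (\<Prod>\<sigma>\<in>node_slots j b. slot_miss A i \<sigma>) \<le> pz j b" if "b \<in> {1, 2, 3}" for b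
    using that zeta_prob_nonneg[OF j] prod_node_slots_miss_bounds[OF j, of A i b]
    by (auto intro: mult_left_le)
  show ?thesis
    using a le[of 1] le[of 2] le[of 3] zeta_prob_sum[of j]
    unfolding node_miss_expand by (auto simp: algebra_simps)
qed

lemma plus_hit_ge:
  assumes j: "j \<in> V" and "j \<in> A" and i: "i \<in> P j Plus" and "0 < x i j"
  shows "(1 - exp (- x i j)) / 4 \<le> pz j 1 * (1 - (\<Prod>\<sigma>\<in>node_slots j 1. slot_miss A i \<sigma>))"
proof -
  have "0 < d j Plus" using x_le_d[OF j i] assms by linarith
  then have "pz j 1 * (1 - (\<Prod>\<sigma>\<in>node_slots j 1. slot_miss A i \<sigma>)) = x i j / 4"
    unfolding zeta_prob_1 using assms by (simp add: node_slots_def slot_miss_eq field_simps)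
  then show ?thesis using exp_ge_add_one_self[of "- x i j"] by simp
qed

lemma minus_hit_ge:
  assumes j: "j \<in> V" and "j \<in> A" and i: "i \<in> P j Minus" and "0 < x i j" "x i j \<le> 1"
  shows "(1 - exp (- x i j)) / 4 \<le> pz j 2 * (1 - (\<Prod>\<sigma>\<in>node_slots j 2. slot_miss A i \<sigma>))"
proof -
  have "(\<Prod>\<sigma>\<in>node_slots j 2. slot_miss A i \<sigma>) = ((d j Minus - x i j) / d j Minus)\<^sup>2"
    using assms by (simp add: node_slots_def slot_miss_eq power2_eq_square)
  then show ?thesis
    unfolding zeta_prob_2 hnode_def
    using one_minus_exp_le_two_draws[of "x i j" "d j Minus"] x_le_d[OF j i] assms by simp
qed

lemma level_slots_miss_le_exp:
  assumes j: "j \<in> V" and "j \<in> A" and "1 \<le> q" and i: "i \<in> P j (Lvl q)" and "0 < x i j"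
  shows "(\<Prod>\<sigma>\<in>node_slots j 3. slot_miss A i \<sigma>) \<le> exp (- (vnode S s c x j * x i j))"
proof -
  let ?d = "d j (Lvl q)" and ?x = "x i j" and ?n = "n j q"
  have dx: "?x \<le> ?d" using x_le_d[OF j i] .
  then have dp: "0 < ?d" using assms by linarith
  have "(\<Prod>\<sigma>\<in>node_slots j 3. slot_miss A i \<sigma>) \<le> (\<Prod>\<sigma>\<in>(\<lambda>m. (j, Lvl q, m)) ` {..<?n}. slot_miss A i \<sigma>)"
  proof (rule prod_superset_le[OF finite_node_slots[OF j]])
    show "(\<lambda>m. (j, Lvl q, m)) ` {..<?n} \<subseteq> node_slots j 3"
      using assms by (auto simp: node_slots_def)
    show "0 \<le> slot_miss A i \<sigma> \<and> slot_miss A i \<sigma> \<le> 1" if "\<sigma> \<in> node_slots j 3" for \<sigma>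
      using slot_miss_bounds fst_node_slots[OF that] j by metis
  qed
  also have "\<dots> = ((?d - ?x) / ?d) ^ ?n"
    using assms by (subst prod.reindex) (auto simp: inj_on_def slot_miss_eq)
  also have "\<dots> \<le> exp (- (?x / ?d)) ^ ?n"
    using exp_ge_add_one_self[of "- (?x / ?d)"] dx dp by (intro power_mono) (auto simp: diff_divide_distrib)
  also have "\<dots> = exp (- (?n * (?x / ?d)))"
    by (simp add: exp_of_nat_mult[symmetric])
  also have "\<dots> \<le> exp (- (vnode S s c x j * ?x))"
  proof -
    have "vnode S s c x j * ?d * (?x / ?d) \<le> ?n * (?x / ?d)"
      unfolding ncnt_def using dp assms by (intro mult_right_mono real_nat_ceiling_ge) auto
    then show ?thesis using dp by simp
  qed
  finally show ?thesis .
qed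

lemma level_hit_ge:
  assumes j: "j \<in> V" and "j \<in> A" and "1 \<le> q" and i: "i \<in> P j (Lvl q)" and "0 < x i j"
  shows "(1 - exp (- x i j)) / 4 \<le> pz j 3 * (1 - (\<Prod>\<sigma>\<in>node_slots j 3. slot_miss A i \<sigma>))"
proof -
  have iS: "i \<in> S" using i P_subset_S by blast
  have "(1 / 2 :: real) ^ (q - 1) \<le> 1" by (simp add: power_le_one)
  then have "(1 / 2) ^ (q - 1) * c j * (1 / 4) \<le> c j * (1 / 4)"
    using c_pos[OF j] by simp
  then have "s i \<le> c j * (1 / 4)"
    using i unfolding Pcls_def by auto
  moreover have "0 \<le> s i' * x i' j" if "i' \<in> S" for i'
    using s_pos[OF that] x_nonneg[OF that j] by simp
  ultimately have "s i * x i j \<le> small_load j"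
    using iS finite_S by (intro member_le_sum) auto
  moreover have "0 < s i * x i j" using s_pos[OF iS] assms by simp
  ultimately have t: "0 < small_load j / c j" using c_pos[OF j] by simp
  have v: "vnode S s c x j * x i j = x i j / (4 * (small_load j / c j))"
    unfolding vnode_def by (simp add: field_simps)
  have "(1 - exp (- x i j)) / 4 \<le> pz j 3 * (1 - exp (- (vnode S s c x j * x i j)))"
    unfolding v using t zeta_prob_3_ge[OF j] assms by (intro one_minus_exp_le_rescaled) auto
  also have "\<dots> \<le> pz j 3 * (1 - (\<Prod>\<sigma>\<in>node_slots j 3. slot_miss A i \<sigma>))"
    using level_slots_miss_le_exp[OF assms] zeta_prob_nonneg[OF j] by (intro mult_left_mono) auto
  finally show ?thesis .
qed

lemma node_miss_le_exp:
  assumes j: "j \<in> V" and jA: "j \<in> A" and i: "i \<in> S"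
  shows "node_miss A i j \<le> 1 - (1 - exp (- x i j)) / 4"
proof (cases "x i j = 0")
  case True
  have "0 \<le> pz j 1 * (1 - (\<Prod>\<sigma>\<in>node_slots j 1. slot_miss A i \<sigma>))"
    using zeta_prob_nonneg[OF j, of 1] prod_node_slots_miss_bounds[OF j, of A i 1]
    by (intro mult_nonneg_nonneg) auto
  then show ?thesis using node_miss_le[OF j, of 1 A i] True by simp
next
  case False
  then have x: "0 < x i j" "x i j \<le> 1" and "s i \<le> c j"
    using x_bounds[OF i j] by (auto simp: not_less[symmetric])
  obtain a where "a \<in> {1, 2, 3}"
    and hit: "(1 - exp (- x i j)) / 4 \<le> pz j a * (1 - (\<Prod>\<sigma>\<in>node_slots j a. slot_miss A i \<sigma>))"
  proof -
    consider "c j / 2 < s i" | "c j / 4 < s i" "s i \<le> c j / 2" | "s i \<le> c j / 4"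
      by linarith
    then show ?thesis
    proof cases
      case 1
      then have "i \<in> P j Plus" using i \<open>s i \<le> c j\<close> unfolding Pcls_def by simp
      then show ?thesis using that[of 1] plus_hit_ge[OF j jA _ x(1)] by simp
    next
      case 2
      then have "i \<in> P j Minus" using i unfolding Pcls_def by simp
      then show ?thesis using that[of 2] minus_hit_ge[OF j jA _ x] by simp
    next
      case 3
      obtain q where q: "1 \<le> q" "(1 / 2) ^ q < 4 * s i / c j" "4 * s i / c j \<le> (1 / 2) ^ (q - 1)"
        using exists_dyadic_level[of "4 * s i / c j"] 3 s_pos[OF i] c_pos[OF j] by auto
      then have "i \<in> P j (Lvl q)"
        using i c_pos[OF j] unfolding Pcls_def by (simp add: field_simps)
      then show ?thesis using that[of 3] level_hit_ge[OF j jA q(1) _ x(1)] by simp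
    qed
  qed
  then show ?thesis using node_miss_le[OF j, of a A i] by linarith
qed

lemma user_hit_prob_ge:
  assumes k: "k \<in> U"
  shows "(1 - exp (-1)) * y k / 4 \<le> 1 - (\<Prod>j\<in>V. node_miss (T k) (isvc k) j)"
proof -
  let ?i = "isvc k" and ?T = "T k"
  have T: "?T \<subseteq> V" "finite ?T" using T_subset_V[OF k] finite_V finite_subset by auto
  have i: "?i \<in> S" using isvc_in_S[OF k] .
  have "(\<Prod>j\<in>V. node_miss ?T ?i j) = (\<Prod>j\<in>?T. node_miss ?T ?i j)"
    using T(1) node_miss_outside by (intro prod.mono_neutral_right[OF finite_V]) auto
  also have "\<dots> \<le> (\<Prod>j\<in>?T. 1 - 1 / 4 + 1 / 4 * exp (- x ?i j))"
  proof (rule prod_mono)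
    fix j assume "j \<in> ?T"
    then have "0 \<le> node_miss ?T ?i j" "node_miss ?T ?i j \<le> 1 - (1 - exp (- x ?i j)) / 4"
      using T i node_miss_nonneg node_miss_le_exp by auto
    then show "0 \<le> node_miss ?T ?i j \<and> node_miss ?T ?i j \<le> 1 - 1 / 4 + 1 / 4 * exp (- x ?i j)"
      by (simp add: field_simps)
  qed
  also have "\<dots> \<le> 1 - 1 / 4 + 1 / 4 * (\<Prod>j\<in>?T. exp (- x ?i j))"
  proof (rule prod_affine_le[OF T(2)])
    show "0 \<le> exp (- x ?i j) \<and> exp (- x ?i j) \<le> 1" if "j \<in> ?T" for j
      using x_nonneg[OF i] T(1) that by auto
  qed simp_all
  also have "(\<Prod>j\<in>?T. exp (- x ?i j)) = exp (- (\<Sum>j\<in>?T. x ?i j))"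
    using T(2) by (simp add: exp_sum[symmetric] sum_negf)
  finally have miss: "(\<Prod>j\<in>V. node_miss ?T ?i j) \<le> 1 - 1 / 4 + 1 / 4 * exp (- (\<Sum>j\<in>?T. x ?i j))" .
  have y: "0 \<le> y k" "y k \<le> (\<Sum>j\<in>?T. x ?i j)" "y k \<le> 1" using y_bounds[OF k] by auto
  have "(1 - exp (-1)) * y k / 4 \<le> (1 - exp (- y k)) / 4"
    using mult_one_minus_exp_le[of "y k" 1] y by (simp add: mult.commute)
  also have "\<dots> \<le> (1 - exp (- (\<Sum>j\<in>?T. x ?i j))) / 4"
    using y by simp
  finally show ?thesis
    using miss by (simp add: field_simps)
qed

end

theorem theorem10:
  fixes S :: "'s set" and V :: "'v set" and U :: "'u set"
    and s :: "'s \<Rightarrow> real" and c :: "'v \<Rightarrow> real"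
    and isvc :: "'u \<Rightarrow> 's" and T :: "'u \<Rightarrow> 'v set" and w :: "'u \<Rightarrow> real"
    and x :: "'s \<Rightarrow> 'v \<Rightarrow> real" and y :: "'u \<Rightarrow> real"
  assumes "spsc_instance S V U s c isvc T w"
    and "lp_optimal S V U s c isvc T w x y"
  shows "expected_reward S V U s c isvc T w x \<ge> (1 - exp (-1)) * opt_reward S V U s c isvc T w / 4"
proof -
  interpret spsc_lp S V U s c isvc T w x y
    using assms by unfold_locales
  have "(1 - exp (-1)) * opt_reward S V U s c isvc T w / 4 \<le> (1 - exp (-1)) * (\<Sum>k\<in>U. y k * w k) / 4"
    using opt_reward_le_lp_optimum[OF assms] by (intro divide_right_mono mult_left_mono) auto
  also have "\<dots> = (\<Sum>k\<in>U. w k * ((1 - exp (-1)) * y k / 4))"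
    by (simp add: sum_distrib_left sum_divide_distrib ac_simps)
  also have "\<dots> \<le> (\<Sum>k\<in>U. w k * (1 - (\<Prod>j\<in>V. node_miss (T k) (isvc k) j)))"
    using user_hit_prob_ge w_pos by (intro sum_mono mult_left_mono) (auto intro: less_imp_le)
  also have "\<dots> = expected_reward S V U s c isvc T w x"
    using expected_reward_eq by simp
  finally show ?thesis .
qed

end
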